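(* Let $R$ be a ring with unity and involution $*$, let $a,b,c,d\in R$ with $a$ and $d$ both left dual $(b,c)$-core invertible. Then (1) for any left dual $(b,c)$-core inverse $y$ of $d$ and any left $(b,c)$-inverse $x$ of $a$, the element $ydx$ is a left dual $(b,c)$-core inverse of $a$; (2) for any left dual $(b,c)$-core inverse $z$ of $a$ and any left $(b,c)$-inverse $w$ of $d$, the element $zaw$ is a left dual $(b,c)$-core inverse of $d$.
   Context: For $u,b,c\in R$, $u$ is left dual $(b,c)$-core invertible if there exists $x\in Rc$ with $bxub=b$ and $(xub)^*=xub$; such $x$ is a left dual $(b,c)$-core inverse of $u$. $u$ is left $(b,c)$-invertible if there exists $x\in Rc$ with $xub=b$; such $x$ is a left $(b,c)$-inverse of $u$ (left dual $(b,c)$-core invertible elements are in particular left $(b,c)$-invertible). *)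

theory Defs
  imports Main
begin

class ring_involution = ring_1 +
  fixes invol :: "'a \<Rightarrow> 'a"
  assumes invol_add: "invol (x + y) = invol x + invol y"
    and invol_mult: "invol (x * y) = invol y * invol x"
    and invol_invol: "invol (invol x) = x"

definition in_left_ideal :: "'a::ring_1 \<Rightarrow> 'a \<Rightarrow> bool" where
  "in_left_ideal x c \<longleftrightarrow> (\<exists>r. x = r * c)"

definition is_left_dual_bc_core_inverse ::
  "'a::ring_involution \<Rightarrow> 'a \<Rightarrow> 'a \<Rightarrow> 'a \<Rightarrow> bool" where
  "is_left_dual_bc_core_inverse x u b c \<longleftrightarrow>
     in_left_ideal x c \<and> b * x * u * b = b \<and> invol (x * u * b) = x * u * b"

definition left_dual_bc_core_invertible ::
  "'a::ring_involution \<Rightarrow> 'a \<Rightarrow> 'a \<Rightarrow> bool" where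
  "left_dual_bc_core_invertible u b c \<longleftrightarrow> (\<exists>x. is_left_dual_bc_core_inverse x u b c)"

definition is_left_bc_inverse :: "'a::ring_1 \<Rightarrow> 'a \<Rightarrow> 'a \<Rightarrow> 'a \<Rightarrow> bool" where
  "is_left_bc_inverse x u b c \<longleftrightarrow> in_left_ideal x c \<and> x * u * b = b"

end

theory Submission
  imports Defs
begin

text \<open>If \<open>x\<close> is a left \<open>(b,c)\<close>-inverse of \<open>a\<close>, then \<open>(y d x) a b = y d b\<close>, so \<open>y d x\<close> satisfies
  with respect to \<open>a\<close> exactly the identities that \<open>y\<close> satisfies with respect to \<open>d\<close>; and
  \<open>y d x\<close> lies in \<open>R c\<close> because \<open>x\<close> does.\<close>

lemma in_left_ideal_mult_left:
  fixes x c r :: "'a::ring_1"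
  assumes "in_left_ideal x c"
  shows "in_left_ideal (r * x) c"
  using assms unfolding in_left_ideal_def by (metis mult.assoc)

lemma is_left_dual_bc_core_inverse_transfer:
  fixes a b c d x y :: "'a::ring_involution"
  assumes core: "is_left_dual_bc_core_inverse y d b c"
    and left_inv: "is_left_bc_inverse x a b c"
  shows "is_left_dual_bc_core_inverse (y * d * x) a b c"
proof -
  have x_ideal: "in_left_ideal x c" and xab: "x * a * b = b"
    using left_inv unfolding is_left_bc_inverse_def by auto
  have bydb: "b * y * d * b = b" and sym: "invol (y * d * b) = y * d * b"
    using core unfolding is_left_dual_bc_core_inverse_def by auto
  have reduce: "y * d * x * a * b = y * d * b"
    using xab by (metis mult.assoc)
  have "in_left_ideal (y * d * x) c"
    using in_left_ideal_mult_left[OF x_ideal] .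
  moreover have "b * (y * d * x) * a * b = b"
    using reduce bydb by (metis mult.assoc)
  ultimately show ?thesis
    unfolding is_left_dual_bc_core_inverse_def using reduce sym by simp
qed

theorem theorem3p18:
  fixes a b c d :: "'a::ring_involution"
  assumes "left_dual_bc_core_invertible a b c"
    and "left_dual_bc_core_invertible d b c"
  shows "(\<forall>y x. is_left_dual_bc_core_inverse y d b c \<longrightarrow> is_left_bc_inverse x a b c
            \<longrightarrow> is_left_dual_bc_core_inverse (y * d * x) a b c)
       \<and> (\<forall>z w. is_left_dual_bc_core_inverse z a b c \<longrightarrow> is_left_bc_inverse w d b c
            \<longrightarrow> is_left_dual_bc_core_inverse (z * a * w) d b c)"
  using is_left_dual_bc_core_inverse_transfer by blast

end
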